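(* Let $k>1$ and let $A=(a,b,1)$ with $a<-\frac1{k-1}$ and $b>-\frac1{k-1}$. If $H(A)\ge0$, then any component of $C_2\cap\{D: A\cdot D^2>0\}$ contains an open arc of points visible from $A$. If $H(A)\le 0$, then some open arc in $C_2\cap\{D: A\cdot D^2<0\}$ consists of points not visible from $A$.
   Context: Let $F=F_k(x,y,z)=-x^3-y^3-(z-x-y)^3+3kxy(z-x-y)$ with $k>1$, and let $H$ be its Hessian (determinant of the matrix of second partials), $H=-54k^2F_{k'}$ with $k'=(4-k^3)/(3k^2)$. In the affine plane $z=1$, $C_2$ is the affine branch of the real curve $H=0$ lying in the region $x>0,y>0,x+y>1$; it bounds a convex region $K$ of the affine plane (the side of $C_2$ containing points with $x,y\gg0$). $A\cdot D^2:=\frac13\sum_iA_i\,\partial F/\partial x_i(D)$. A point $D\in C_2$ is visible from $A$ if the line segment from $A$ to $D$ does not meet the interior of $K$. *)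

theory Defs
  imports "HOL-Analysis.Analysis"
begin

definition Fk :: "real \<Rightarrow> real \<Rightarrow> real \<Rightarrow> real \<Rightarrow> real" where
  "Fk k x y z = - (x^3) - y^3 - (z - x - y)^3 + 3 * k * x * y * (z - x - y)"

definition pdiff :: "(real \<Rightarrow> real \<Rightarrow> real \<Rightarrow> real) \<Rightarrow> nat \<Rightarrow> real \<Rightarrow> real \<Rightarrow> real \<Rightarrow> real" where
  "pdiff f i x y z =
     (if i = 0 then deriv (\<lambda>t. f t y z) x
      else if i = 1 then deriv (\<lambda>t. f x t z) y
      else deriv (\<lambda>t. f x y t) z)"

definition Hess :: "real \<Rightarrow> real \<Rightarrow> real \<Rightarrow> real \<Rightarrow> real" where
  "Hess k x y z =
     (let m = (\<lambda>i j. pdiff (pdiff (Fk k) j) i x y z) in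
        m 0 0 * (m 1 1 * m 2 2 - m 1 2 * m 2 1)
      - m 0 1 * (m 1 0 * m 2 2 - m 1 2 * m 2 0)
      + m 0 2 * (m 1 0 * m 2 1 - m 1 1 * m 2 0))"

text \<open>Polar pairing  A . D^2 = 1/3 sum_i A_i (dF/dx_i)(D),  points given by homogeneous coordinates.\<close>
definition polar :: "real \<Rightarrow> real \<times> real \<times> real \<Rightarrow> real \<times> real \<times> real \<Rightarrow> real" where
  "polar k A D = (case A of (a0, a1, a2) \<Rightarrow> case D of (d0, d1, d2) \<Rightarrow>
      (1/3) * (a0 * pdiff (Fk k) 0 d0 d1 d2 + a1 * pdiff (Fk k) 1 d0 d1 d2
               + a2 * pdiff (Fk k) 2 d0 d1 d2))"

definition C2 :: "real \<Rightarrow> (real \<times> real) set" where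
  "C2 k = {(x, y). 0 < x \<and> 0 < y \<and> 1 < x + y \<and> Hess k x y 1 = 0}"

text \<open>Interior of the convex region K bounded by C_2: the component of the complement
  of C_2 containing all points with both coordinates sufficiently large.\<close>
definition Kint :: "real \<Rightarrow> (real \<times> real) set" where
  "Kint k = {q. \<exists>N. \<forall>x y. N \<le> x \<and> N \<le> y \<longrightarrow> connected_component (- C2 k) q (x, y)}"

definition visible :: "real \<Rightarrow> real \<times> real \<Rightarrow> real \<times> real \<Rightarrow> bool" where
  "visible k A D \<longleftrightarrow> closed_segment A D \<inter> Kint k = {}"

definition open_arc :: "(real \<times> real) set \<Rightarrow> bool" where
  "open_arc S \<longleftrightarrow> S homeomorphic ({0<..<1} :: real set)"

end

theory Submission
  imports Defs "HOL-Real_Asymp.Real_Asymp"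
begin

text \<open>
  In the coordinates (x, y, w) with w = z - x - y the cubic F_k becomes -(x^3 + y^3 + w^3 - 3 k x y w),
  and its Hessian is a multiple of the Hesse cubic G = x^3 + y^3 + w^3 - 3 k' x y w. On the plane
  x + y + w = 1, G is a negative multiple of l1 l2 l3 - g for three lines l1, l2, l3 and a constant
  g > 0, so C2 is the branch l1 l2 l3 = g with all li > 0 and the interior of K is the region where the
  product exceeds g. By AM-GM the tangent line to C2 at D supports K, hence D is visible from A
  exactly when the polar of G at D, evaluated at A, is nonnegative.

  If G(A) >= 0, an identity involving the tangential point of D shows that this polar cannot be
  negative where the polar of F_k is positive, so every point of C2 with A.D^2 > 0 is visible; open
  arcs are pieces of C2 written as a graph over x. If G(A) <= 0, then a < -1/(k - 1) forces
  l2(A) > 0, and far out along C2 the two polars have the signs of their leading coefficients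
  1 + (k - 1) b > 0 and -l2(A) < 0: there A.D^2 < 0 and the tangent line separates A from K.
\<close>

section \<open>The Hesse cubic\<close>

definition hesse_cubic :: "real \<Rightarrow> real \<Rightarrow> real \<Rightarrow> real \<Rightarrow> real" where
  "hesse_cubic q x y w = x^3 + y^3 + w^3 - 3*q*x*y*w"

text \<open>hesse_polar q D A is one third of the derivative of hesse_cubic q at D in direction A; for
  fixed D on the cubic its zero set in A is the tangent line at D.\<close>

definition hesse_polar :: "real \<Rightarrow> real \<Rightarrow> real \<Rightarrow> real \<Rightarrow> real \<Rightarrow> real \<Rightarrow> real \<Rightarrow> real" where
  "hesse_polar q x y w a1 a2 a3 =
     (x^2*a1 + y^2*a2 + w^2*a3) - q * (y*w*a1 + x*w*a2 + x*y*a3)"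

definition hesse_param :: "real \<Rightarrow> real" where
  "hesse_param k = (4 - k^3) / (3*k^2)"

lemma hesse_polar_self: "hesse_polar q x y w x y w = hesse_cubic q x y w"
  unfolding hesse_polar_def hesse_cubic_def by algebra

lemma hesse_polar_convex_comb:
  "hesse_polar q x y w ((1-t)*a1 + t*b1) ((1-t)*a2 + t*b2) ((1-t)*a3 + t*b3)
     = (1-t) * hesse_polar q x y w a1 a2 a3 + t * hesse_polar q x y w b1 b2 b3"
  unfolding hesse_polar_def by (simp add: algebra_simps)

lemma pdiff_Fk:
  "pdiff (Fk k) 0 = (\<lambda>x y z. -3*x^2 + 3*(z-x-y)^2 + 3*k*y*(z-x-y) - 3*k*x*y)"
  "pdiff (Fk k) 1 = (\<lambda>x y z. -3*y^2 + 3*(z-x-y)^2 + 3*k*x*(z-x-y) - 3*k*x*y)"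
  "pdiff (Fk k) 2 = (\<lambda>x y z. -3*(z-x-y)^2 + 3*k*x*y)"
  unfolding fun_eq_iff pdiff_def Fk_def
  by simp_all ((intro allI DERIV_imp_deriv; (rule derivative_eq_intros refl | simp)+;
      simp add: algebra_simps power2_eq_square)+)

lemma pdiff_pdiff_Fk:
  "pdiff (pdiff (Fk k) 0) 0 x y z = -6*x - 6*(z-x-y) - 6*k*y"
  "pdiff (pdiff (Fk k) 0) 1 x y z = -6*(z-x-y) + 3*k*(z-x-y) - 3*k*y - 3*k*x"
  "pdiff (pdiff (Fk k) 0) 2 x y z = 6*(z-x-y) + 3*k*y"
  "pdiff (pdiff (Fk k) 1) 0 x y z = -6*(z-x-y) + 3*k*(z-x-y) - 3*k*x - 3*k*y"
  "pdiff (pdiff (Fk k) 1) 1 x y z = -6*y - 6*(z-x-y) - 6*k*x"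
  "pdiff (pdiff (Fk k) 1) 2 x y z = 6*(z-x-y) + 3*k*x"
  "pdiff (pdiff (Fk k) 2) 0 x y z = 6*(z-x-y) + 3*k*y"
  "pdiff (pdiff (Fk k) 2) 1 x y z = 6*(z-x-y) + 3*k*x"
  "pdiff (pdiff (Fk k) 2) 2 x y z = -6*(z-x-y)"
  unfolding pdiff_Fk pdiff_def
  by simp_all ((rule DERIV_imp_deriv; (rule derivative_eq_intros refl | simp)+;
      simp add: algebra_simps power2_eq_square)+)

lemma Hess_eq_hesse_cubic:
  "k \<noteq> 0 \<Longrightarrow> Hess k x y z = 54 * k^2 * hesse_cubic (hesse_param k) x y (z - x - y)"
  unfolding Hess_def Let_def pdiff_pdiff_Fk hesse_cubic_def hesse_param_def
  by (simp add: field_simps power2_eq_square power3_eq_cube)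

lemma polar_eq_hesse_polar:
  "polar k (a, b, c) (x, y, z) = - hesse_polar k x y (z - x - y) a b (c - a - b)"
  unfolding polar_def pdiff_Fk hesse_polar_def by (simp add: algebra_simps power2_eq_square)

section \<open>The branch C2 as a cubic hyperbola\<close>

definition hesse_m :: "real \<Rightarrow> real" where
  "hesse_m k = 1 - hesse_param k"

definition ell1 :: "real \<Rightarrow> real \<times> real \<Rightarrow> real" where
  "ell1 m p = m * fst p - 1"

definition ell2 :: "real \<Rightarrow> real \<times> real \<Rightarrow> real" where
  "ell2 m p = m * snd p - 1"

text \<open>ell3 m (x, y) = 1 - m w for w = 1 - x - y, so the three lines play symmetric roles.\<close>

definition ell3 :: "real \<Rightarrow> real \<times> real \<Rightarrow> real" where
  "ell3 m p = m * (fst p + snd p) + 1 - m"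

definition branch_level :: "real \<Rightarrow> real" where
  "branch_level m = (m^2 - 3*m + 3) / 3"

definition convex_side :: "real \<Rightarrow> (real \<times> real) set" where
  "convex_side m = {p. 0 < ell1 m p \<and> 0 < ell2 m p \<and> 0 < ell3 m p
                       \<and> branch_level m < ell1 m p * ell2 m p * ell3 m p}"

definition hesse_branch :: "real \<Rightarrow> (real \<times> real) set" where
  "hesse_branch m = {(x, y). 0 < x \<and> 0 < y \<and> 1 < x + y \<and> hesse_cubic (1 - m) x y (1 - x - y) = 0}"

lemma hesse_m_eq: "k \<noteq> 0 \<Longrightarrow> hesse_m k = (k - 1) * (k + 2)^2 / (3 * k^2)"
  unfolding hesse_m_def hesse_param_def by (simp add: field_simps) algebra

lemma hesse_m_pos: "k > 1 \<Longrightarrow> hesse_m k > 0"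
  by (simp add: hesse_m_eq)

lemma one_minus_hesse_m: "1 - hesse_m k = hesse_param k"
  unfolding hesse_m_def by simp

lemma branch_level_pos: "branch_level m > 0"
proof -
  have "m^2 - 3*m + 3 = (m - 3/2)^2 + 3/4"
    by (simp add: algebra_simps power2_eq_square)
  then have "m^2 - 3*m + 3 > 0"
    using zero_le_power2[of "m - 3/2"] by linarith
  then show ?thesis
    unfolding branch_level_def by simp
qed

lemma C2_eq_hesse_branch: "k \<noteq> 0 \<Longrightarrow> C2 k = hesse_branch (hesse_m k)"
  unfolding C2_def hesse_branch_def hesse_m_def by (simp add: Hess_eq_hesse_cubic)

lemma hesse_cubic_eq_lines:
  "m \<noteq> 0 \<Longrightarrow> hesse_cubic (1 - m) x y (1 - x - y)
     = 3 / m^2 * (branch_level m - ell1 m (x, y) * ell2 m (x, y) * ell3 m (x, y))"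
  unfolding hesse_cubic_def branch_level_def ell1_def ell2_def ell3_def
  by (simp add: field_simps) algebra

lemma hesse_cubic_eq_graph:
  "hesse_cubic (1 - m) x y (1 - x - y) = 3 * (1 - m*x) * (y * (x + y - 1)) + (3*x^2 - 3*x + 1)"
  "hesse_cubic (1 - m) x y (1 - x - y) = 3 * (1 - m*y) * (x * (x + y - 1)) + (3*y^2 - 3*y + 1)"
  unfolding hesse_cubic_def by algebra+

lemma quadratic_3_3_1_pos: "3*x^2 - 3*x + 1 > (0::real)"
proof -
  have "3*x^2 - 3*x + 1 = 3*(x - 1/2)^2 + 1/4"
    by (simp add: algebra_simps power2_eq_square)
  then show ?thesis
    using zero_le_power2[of "x - 1/2"] by linarith
qed

lemma hesse_branch_one_less:
  assumes "(x, y) \<in> hesse_branch m"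
  shows "1 < m*x" "1 < m*y"
proof -
  have "0 < x" "0 < y" "0 < x + y - 1" and on: "hesse_cubic (1 - m) x y (1 - x - y) = 0"
    using assms unfolding hesse_branch_def by auto
  then have pos: "0 < y * (x + y - 1)" "0 < x * (x + y - 1)"
    by simp_all
  have "3 * (1 - m*x) * (y * (x + y - 1)) < 0" "3 * (1 - m*y) * (x * (x + y - 1)) < 0"
    using on[unfolded hesse_cubic_eq_graph(1)] on[unfolded hesse_cubic_eq_graph(2)]
      quadratic_3_3_1_pos[of x] quadratic_3_3_1_pos[of y] by linarith+
  then show "1 < m*x" "1 < m*y"
    using pos \<open>0 < x\<close> \<open>0 < y\<close> \<open>0 < x + y - 1\<close> by (auto simp: mult_less_0_iff)
qed

lemma mem_hesse_branch_iff_lines: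
  assumes "m > 0"
  shows "(x, y) \<in> hesse_branch m \<longleftrightarrow>
           0 < ell1 m (x, y) \<and> 0 < ell2 m (x, y)
           \<and> ell1 m (x, y) * ell2 m (x, y) * ell3 m (x, y) = branch_level m"
proof -
  have on_iff: "hesse_cubic (1 - m) x y (1 - x - y) = 0
      \<longleftrightarrow> ell1 m (x, y) * ell2 m (x, y) * ell3 m (x, y) = branch_level m"
    using assms by (auto simp: hesse_cubic_eq_lines)
  have branch_if: "(x, y) \<in> hesse_branch m"
    if "1 < m*x" "1 < m*y" and on: "hesse_cubic (1 - m) x y (1 - x - y) = 0"
  proof -
    have "0 < m*x" "0 < m*y"
      using that(1,2) by linarith+
    then have "0 < x" "0 < y"
      using assms by (simp_all add: zero_less_mult_iff)
    have "3 * (m*x - 1) * (y * (x + y - 1)) = 3*x^2 - 3*x + 1"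
      using on unfolding hesse_cubic_eq_graph(1) by (simp add: algebra_simps)
    then have "0 < 3 * (m*x - 1) * (y * (x + y - 1))"
      using quadratic_3_3_1_pos[of x] by linarith
    moreover have "0 < 3 * (m*x - 1)"
      using \<open>1 < m*x\<close> by simp
    ultimately have "0 < y * (x + y - 1)"
      by (rule zero_less_mult_pos)
    then show ?thesis
      using \<open>0 < x\<close> \<open>0 < y\<close> on unfolding hesse_branch_def by (simp add: zero_less_mult_iff)
  qed
  show ?thesis
  proof
    assume D: "(x, y) \<in> hesse_branch m"
    then have "hesse_cubic (1 - m) x y (1 - x - y) = 0"
      unfolding hesse_branch_def by simp
    then show "0 < ell1 m (x, y) \<and> 0 < ell2 m (x, y)
        \<and> ell1 m (x, y) * ell2 m (x, y) * ell3 m (x, y) = branch_level m"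
      using hesse_branch_one_less[OF D] on_iff unfolding ell1_def ell2_def by simp
  qed (use branch_if on_iff in \<open>simp add: ell1_def ell2_def\<close>)
qed

lemma hesse_branch_lines_pos:
  assumes "m > 0" and "(x, y) \<in> hesse_branch m"
  shows "0 < ell1 m (x, y)" "0 < ell2 m (x, y)" "0 < ell3 m (x, y)"
proof -
  have lines: "0 < ell1 m (x, y)" "0 < ell2 m (x, y)"
    "ell1 m (x, y) * ell2 m (x, y) * ell3 m (x, y) = branch_level m"
    using assms mem_hesse_branch_iff_lines by blast+
  then show "0 < ell1 m (x, y)" "0 < ell2 m (x, y)"
    by simp_all
  show "0 < ell3 m (x, y)"
    using lines branch_level_pos[of m] by (metis mult_pos_pos zero_less_mult_pos)
qed

text \<open>branch_graph m x is the positive root y of y (x + y - 1) = (3 x^2 - 3 x + 1) / (3 (m x - 1)),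
  the branch equation solved for y (see hesse_cubic_eq_graph).\<close>

definition branch_graph :: "real \<Rightarrow> real \<Rightarrow> real" where
  "branch_graph m x = (1 - x + sqrt ((x - 1)^2 + 4 * ((3*x^2 - 3*x + 1) / (3 * (m*x - 1))))) / 2"

lemma mem_hesse_branch_iff_graph:
  assumes "m > 0"
  shows "(x, y) \<in> hesse_branch m \<longleftrightarrow> 1 < m*x \<and> y = branch_graph m x"
proof -
  define R where "R = (3*x^2 - 3*x + 1) / (3 * (m*x - 1))"
  have on_iff: "hesse_cubic (1 - m) x y (1 - x - y) = 0 \<longleftrightarrow> y * (x + y - 1) = R" if "1 < m*x"
    using that unfolding hesse_cubic_eq_graph(1) R_def by (auto simp: field_simps)
  have R_pos: "R > 0" if "1 < m*x"
    unfolding R_def using that quadratic_3_3_1_pos[of x] by simp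
  show ?thesis
  proof
    assume D: "(x, y) \<in> hesse_branch m"
    then have "1 < m*x"
      by (rule hesse_branch_one_less)
    have "0 < y" "1 < x + y" "y * (x + y - 1) = R"
      using D on_iff[OF \<open>1 < m*x\<close>] unfolding hesse_branch_def by auto
    then have "sqrt ((x - 1)^2 + 4*R) = 2*y + x - 1"
      by (intro real_sqrt_unique) (auto simp: algebra_simps power2_eq_square)
    then show "1 < m*x \<and> y = branch_graph m x"
      using \<open>1 < m*x\<close> unfolding branch_graph_def R_def[symmetric] by simp
  next
    assume "1 < m*x \<and> y = branch_graph m x"
    then have "1 < m*x" and y: "y = (1 - x + sqrt ((x - 1)^2 + 4*R)) / 2"
      unfolding branch_graph_def R_def by auto
    define s where "s = sqrt ((x - 1)^2 + 4*R)"
    have "(x - 1)^2 < (x - 1)^2 + 4*R"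
      using R_pos[OF \<open>1 < m*x\<close>] by simp
    then have "\<bar>x - 1\<bar> < s" and s_sq: "s^2 = (x - 1)^2 + 4*R"
      unfolding s_def using real_less_rsqrt by (auto simp del: real_sqrt_less_iff)
    then have "0 < y" "1 < x + y"
      using y[folded s_def] by (auto simp: abs_less_iff)
    moreover have "y * (x + y - 1) = R"
      using s_sq unfolding y s_def[symmetric] by (simp add: field_simps power2_eq_square)
    moreover have "0 < m*x"
      using \<open>1 < m*x\<close> by linarith
    then have "0 < x"
      using assms by (simp add: zero_less_mult_iff)
    ultimately show "(x, y) \<in> hesse_branch m"
      using on_iff[OF \<open>1 < m*x\<close>] unfolding hesse_branch_def by auto
  qed
qed

lemma continuous_on_branch_graph: "continuous_on {x. 1 < m*x} (branch_graph m)"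
  unfolding branch_graph_def by (intro continuous_intros) auto

lemma branch_graph_tendsto: "m > 0 \<Longrightarrow> (branch_graph m \<longlongrightarrow> 1/m) at_top"
  unfolding branch_graph_def by (real_asymp simp: field_simps)


section \<open>The convex region K\<close>

lemma convex_side_mono:
  assumes "m > 0" and "p \<in> convex_side m" and "fst p \<le> fst r" "snd p \<le> snd r"
  shows "r \<in> convex_side m"
proof -
  have le: "ell1 m p \<le> ell1 m r" "ell2 m p \<le> ell2 m r" "ell3 m p \<le> ell3 m r"
    unfolding ell1_def ell2_def ell3_def using assms by (auto intro: mult_left_mono)
  moreover have "0 < ell1 m p" "0 < ell2 m p" "0 < ell3 m p"
    and "branch_level m < ell1 m p * ell2 m p * ell3 m p"
    using assms(2) unfolding convex_side_def by auto
  moreover have "ell1 m p * ell2 m p * ell3 m p \<le> ell1 m r * ell2 m r * ell3 m r"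
    using calculation by (intro mult_mono) auto
  ultimately show ?thesis
    unfolding convex_side_def by auto
qed

lemma open_convex_side: "open (convex_side m)"
  unfolding convex_side_def ell1_def ell2_def ell3_def
  by (intro open_Collect_conj open_Collect_less continuous_intros)

lemma eventually_diagonal_in_convex_side:
  assumes "m > 0"
  shows "eventually (\<lambda>N. (N, N) \<in> convex_side m) at_top"
  unfolding convex_side_def ell1_def ell2_def ell3_def branch_level_def
  using assms by (simp only: mem_Collect_eq fst_conv snd_conv, intro eventually_conj; real_asymp)

lemma convex_side_disjoint_hesse_branch: "m > 0 \<Longrightarrow> convex_side m \<inter> hesse_branch m = {}"
  unfolding convex_side_def by (auto simp: mem_hesse_branch_iff_lines)

lemma closed_segment_coordinate_bounds:
  fixes p r z :: "real \<times> real"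
  assumes "z \<in> closed_segment p r" and "fst p \<le> fst r" "snd p \<le> snd r"
  shows "fst p \<le> fst z" "snd p \<le> snd z"
proof -
  obtain u where u: "0 \<le> u" "u \<le> 1" "z = (1 - u) *\<^sub>R p + u *\<^sub>R r"
    using assms(1) unfolding closed_segment_def by auto
  have "u * fst p \<le> u * fst r" "u * snd p \<le> u * snd r"
    using u assms(2,3) by (simp_all add: mult_left_mono)
  moreover have "fst z = fst p + (u * fst r - u * fst p)" "snd z = snd p + (u * snd r - u * snd p)"
    unfolding u(3) by (simp_all add: algebra_simps)
  ultimately show "fst p \<le> fst z" "snd p \<le> snd z"
    by linarith+
qed

lemma far_component_eq_convex_side:
  assumes "m > 0"
  shows "{q. \<exists>N. \<forall>x y. N \<le> x \<and> N \<le> y \<longrightarrow> connected_component (- hesse_branch m) q (x, y)}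
           = convex_side m"
proof (intro equalityI subsetI)
  fix q assume "q \<in> convex_side m"
  have "connected_component (- hesse_branch m) q (x, y)"
    if "max (fst q) (snd q) \<le> x" "max (fst q) (snd q) \<le> y" for x y
  proof -
    have "closed_segment q (x, y) \<subseteq> convex_side m"
      using that closed_segment_coordinate_bounds[of _ q "(x, y)"]
        convex_side_mono[OF assms \<open>q \<in> convex_side m\<close>] by auto
    then show ?thesis
      using convex_side_disjoint_hesse_branch[OF assms] unfolding connected_component_def
      by (intro exI[of _ "closed_segment q (x, y)"]) auto
  qed
  then show "q \<in> {q. \<exists>N. \<forall>x y. N \<le> x \<and> N \<le> y \<longrightarrow> connected_component (- hesse_branch m) q (x, y)}"
    by blast
next
  fix q assume "q \<in> {q. \<exists>N. \<forall>x y. N \<le> x \<and> N \<le> y \<longrightarrow> connected_component (- hesse_branch m) q (x, y)}"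
  then obtain N where N: "\<And>x y. N \<le> x \<Longrightarrow> N \<le> y \<Longrightarrow> connected_component (- hesse_branch m) q (x, y)"
    by blast
  have "eventually (\<lambda>M. N \<le> M \<and> (M, M) \<in> convex_side m) at_top"
    by (intro eventually_conj eventually_ge_at_top eventually_diagonal_in_convex_side assms)
  then obtain M where "N \<le> M" "(M, M) \<in> convex_side m"
    using eventually_happens[of _ "at_top :: real filter"] by auto
  then obtain T where T: "connected T" "T \<subseteq> - hesse_branch m" "q \<in> T" "(M, M) \<in> T"
    using N[of M M] unfolding connected_component_def by blast
  define F where "F = {p. 0 \<le> ell1 m p \<and> 0 \<le> ell2 m p \<and> 0 \<le> ell3 m p
                          \<and> branch_level m \<le> ell1 m p * ell2 m p * ell3 m p}"
  have "closed F"
    unfolding F_def ell1_def ell2_def ell3_def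
    by (intro closed_Collect_conj closed_Collect_le continuous_intros)
  \<comment> \<open>Off the branch, F coincides with the open set convex_side m, so convex_side m is clopen in T.\<close>
  have "p \<in> convex_side m" if "p \<in> F" "p \<notin> hesse_branch m" for p
  proof -
    have "0 < ell1 m p" "0 < ell2 m p" "0 < ell3 m p"
      using that(1) branch_level_pos[of m] unfolding F_def by (auto simp: order.order_iff_strict)
    then show ?thesis
      using that mem_hesse_branch_iff_lines[OF assms, of "fst p" "snd p"]
      unfolding F_def convex_side_def by auto
  qed
  then have "T \<subseteq> convex_side m \<union> - F"
    using T(2) by auto
  moreover have "convex_side m \<subseteq> F"
    unfolding convex_side_def F_def by auto
  ultimately have "convex_side m \<inter> T = {} \<or> - F \<inter> T = {}"
    using connectedD[OF T(1) open_convex_side[of m], of "- F"] \<open>closed F\<close> by (auto simp: open_Compl)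
  then show "q \<in> convex_side m"
    using T(3,4) \<open>(M, M) \<in> convex_side m\<close> \<open>T \<subseteq> convex_side m \<union> - F\<close> by auto
qed

lemma Kint_eq_convex_side: "k > 1 \<Longrightarrow> Kint k = convex_side (hesse_m k)"
  unfolding Kint_def using C2_eq_hesse_branch far_component_eq_convex_side hesse_m_pos by simp

section \<open>Visibility and tangent lines\<close>

lemma hesse_polar_eq_lines:
  "m \<noteq> 0 \<Longrightarrow> hesse_polar (1 - m) x y (1 - x - y) a b (1 - a - b)
     = 1 / m^2 * (3 * branch_level m
         - (ell1 m (a, b) * ell2 m (x, y) * ell3 m (x, y) + ell1 m (x, y) * ell2 m (a, b) * ell3 m (x, y)
            + ell1 m (x, y) * ell2 m (x, y) * ell3 m (a, b)))"
  unfolding hesse_polar_def branch_level_def ell1_def ell2_def ell3_def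
  by (simp add: field_simps) algebra

lemma sum_gt_3_if_prod_gt_1:
  fixes r1 r2 r3 :: real
  assumes "0 < r1" "0 < r2" "0 < r3" and "1 < r1 * r2 * r3"
  shows "3 < r1 + r2 + r3"
proof -
  have "(\<Prod>i\<in>{0, 1, 2 :: nat}. [r1, r2, r3] ! i) powr (1 / card {0, 1, 2 :: nat})
          \<le> (\<Sum>i\<in>{0, 1, 2 :: nat}. [r1, r2, r3] ! i / card {0, 1, 2 :: nat})"
    using assms(1-3) by (intro arith_geom_mean) auto
  then have "(r1 * r2 * r3) powr (1/3) \<le> r1/3 + r2/3 + r3/3"
    by (simp add: mult.assoc add.assoc)
  moreover have "1 < (r1 * r2 * r3) powr (1/3)"
    using assms(4) by simp
  ultimately show ?thesis
    by linarith
qed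

lemma hesse_polar_neg_on_convex_side:
  assumes "m > 0" and "(x, y) \<in> hesse_branch m" and "(a, b) \<in> convex_side m"
  shows "hesse_polar (1 - m) x y (1 - x - y) a b (1 - a - b) < 0"
proof -
  let ?D = "(x, y)" and ?Z = "(a, b)"
  have D: "0 < ell1 m ?D" "0 < ell2 m ?D" "0 < ell3 m ?D"
    "ell1 m ?D * ell2 m ?D * ell3 m ?D = branch_level m"
    using hesse_branch_lines_pos[OF assms(1,2)] assms(2) mem_hesse_branch_iff_lines[OF assms(1)] by auto
  have Z: "0 < ell1 m ?Z" "0 < ell2 m ?Z" "0 < ell3 m ?Z"
    "branch_level m < ell1 m ?Z * ell2 m ?Z * ell3 m ?Z"
    using assms(3) unfolding convex_side_def by auto
  define r1 where "r1 = ell1 m ?Z / ell1 m ?D"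
  define r2 where "r2 = ell2 m ?Z / ell2 m ?D"
  define r3 where "r3 = ell3 m ?Z / ell3 m ?D"
  have "r1 * r2 * r3 = ell1 m ?Z * ell2 m ?Z * ell3 m ?Z / branch_level m"
    unfolding r1_def r2_def r3_def D(4)[symmetric] by simp
  then have "3 < r1 + r2 + r3"
    using D Z D(3) branch_level_pos[of m]
    by (intro sum_gt_3_if_prod_gt_1) (simp_all add: r1_def r2_def r3_def)
  then have "3 * branch_level m < branch_level m * (r1 + r2 + r3)"
    using branch_level_pos[of m] by simp
  also have "\<dots> = ell1 m ?Z * ell2 m ?D * ell3 m ?D + ell1 m ?D * ell2 m ?Z * ell3 m ?D
                   + ell1 m ?D * ell2 m ?D * ell3 m ?Z"
    unfolding r1_def r2_def r3_def D(4)[symmetric] using D D(3) branch_level_pos[of m]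
    by (simp add: field_simps)
  finally show ?thesis
    using assms(1) by (auto simp: hesse_polar_eq_lines intro!: divide_neg_pos)
qed

lemma hesse_cubic_line_deriv:
  "((\<lambda>t. hesse_cubic q (x + t*(a - x)) (y + t*(b - y)) (w + t*(c - w)))
      has_real_derivative 3 * hesse_polar q x y w a b c - 3 * hesse_cubic q x y w) (at 0)"
  unfolding hesse_cubic_def hesse_polar_def
  by (rule derivative_eq_intros refl | simp)+ algebra

lemma hesse_polar_on_segment:
  assumes "hesse_cubic q x y (1 - x - y) = 0"
  shows "hesse_polar q x y (1 - x - y) ((1 - u)*a + u*x) ((1 - u)*b + u*y)
           (1 - ((1 - u)*a + u*x) - ((1 - u)*b + u*y))
         = (1 - u) * hesse_polar q x y (1 - x - y) a b (1 - a - b)"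
proof -
  have "1 - ((1 - u)*a + u*x) - ((1 - u)*b + u*y) = (1 - u)*(1 - a - b) + u*(1 - x - y)"
    by (simp add: algebra_simps)
  then show ?thesis
    using assms by (simp add: hesse_polar_convex_comb hesse_polar_self)
qed

lemma closed_segment_disjoint_convex_side:
  assumes "m > 0" and D: "(x, y) \<in> hesse_branch m"
    and "0 \<le> hesse_polar (1 - m) x y (1 - x - y) a b (1 - a - b)"
  shows "closed_segment (a, b) (x, y) \<inter> convex_side m = {}"
proof (rule ccontr)
  assume "closed_segment (a, b) (x, y) \<inter> convex_side m \<noteq> {}"
  then obtain u where "u \<le> 1" and in_side: "((1 - u)*a + u*x, (1 - u)*b + u*y) \<in> convex_side m"
    unfolding closed_segment_def by auto
  have "hesse_polar (1 - m) x y (1 - x - y) ((1 - u)*a + u*x) ((1 - u)*b + u*y)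
          (1 - ((1 - u)*a + u*x) - ((1 - u)*b + u*y)) < 0"
    by (rule hesse_polar_neg_on_convex_side[OF assms(1) D in_side])
  then have "(1 - u) * hesse_polar (1 - m) x y (1 - x - y) a b (1 - a - b) < 0"
    using hesse_polar_on_segment[of "1 - m" x y u a b] D unfolding hesse_branch_def by simp
  then show False
    using assms(3) \<open>u \<le> 1\<close> by (simp add: mult_less_0_iff)
qed

lemma closed_segment_meets_convex_side:
  assumes "m > 0" and D: "(x, y) \<in> hesse_branch m"
    and "hesse_polar (1 - m) x y (1 - x - y) a b (1 - a - b) < 0"
  shows "closed_segment (a, b) (x, y) \<inter> convex_side m \<noteq> {}"
proof -
  define z where "z t = (x + t*(a - x), y + t*(b - y))" for t
  define h where "h t = hesse_cubic (1 - m) (x + t*(a - x)) (y + t*(b - y))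
                          ((1 - x - y) + t*((1 - a - b) - (1 - x - y)))" for t
  have h_z: "h t = hesse_cubic (1 - m) (fst (z t)) (snd (z t)) (1 - fst (z t) - snd (z t))" for t
    unfolding h_def z_def by (simp add: algebra_simps)
  have "h 0 = 0"
    using D unfolding h_def hesse_branch_def by simp
  have "(h has_real_derivative 3 * hesse_polar (1 - m) x y (1 - x - y) a b (1 - a - b)) (at 0)"
    using hesse_cubic_line_deriv[of "1 - m" x a y b "1 - x - y" "1 - a - b"] \<open>h 0 = 0\<close>
    unfolding h_def by simp
  then obtain d where "d > 0" "\<forall>t>0. t < d \<longrightarrow> h (0 + t) < h 0"
    using DERIV_neg_dec_right assms(3) by (metis mult_pos_neg zero_less_numeral)
  then have "eventually (\<lambda>t. h t < 0) (at_right 0)"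
    unfolding eventually_at_right_field using \<open>h 0 = 0\<close> by (intro exI[of _ d]) auto
  moreover
  \<comment> \<open>Near D all three lines stay positive, so h t < 0 puts z t into convex_side m.\<close>
  have "eventually (\<lambda>t. z t \<in> {p. 0 < ell1 m p \<and> 0 < ell2 m p \<and> 0 < ell3 m p}) (at_right 0)"
  proof (rule topological_tendstoD)
    show "(z \<longlongrightarrow> (x, y)) (at_right 0)"
      unfolding z_def by (auto intro!: tendsto_eq_intros)
    show "open {p. 0 < ell1 m p \<and> 0 < ell2 m p \<and> 0 < ell3 m p}"
      unfolding ell1_def ell2_def ell3_def by (intro open_Collect_conj open_Collect_less continuous_intros)
  qed (use hesse_branch_lines_pos[OF assms(1) D] in simp)
  moreover have "eventually (\<lambda>t. t \<in> {0<..<1}) (at_right (0::real))"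
    by (rule eventually_at_right_real) simp
  ultimately have "eventually (\<lambda>t. z t \<in> convex_side m \<and> t \<in> {0<..<1}) (at_right 0)"
    by eventually_elim
      (use assms(1) in \<open>auto simp: h_z convex_side_def hesse_cubic_eq_lines divide_less_0_iff\<close>)
  then obtain t where "z t \<in> convex_side m" "0 < t" "t < 1"
    using eventually_happens[of _ "at_right (0::real)"] by auto
  moreover have "z t \<in> closed_segment (a, b) (x, y)"
    unfolding closed_segment_def z_def using \<open>0 < t\<close> \<open>t < 1\<close>
    by (intro CollectI exI[of _ "1 - t"]) (auto simp: algebra_simps)
  ultimately show ?thesis
    by blast
qed

lemma visible_iff_hesse_polar:
  assumes "k > 1" and "(x, y) \<in> C2 k"
  shows "visible k (a, b) (x, y) \<longleftrightarrow> 0 \<le> hesse_polar (hesse_param k) x y (1 - x - y) a b (1 - a - b)"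
proof -
  have D: "(x, y) \<in> hesse_branch (hesse_m k)"
    using assms C2_eq_hesse_branch[of k] by simp
  note m_pos = hesse_m_pos[OF assms(1)]
  show ?thesis
    using closed_segment_disjoint_convex_side[OF m_pos D, of a b]
      closed_segment_meets_convex_side[OF m_pos D, of a b]
    unfolding visible_def Kint_eq_convex_side[OF assms(1)] one_minus_hesse_m by (meson not_le)
qed

section \<open>A sign lemma for the Hesse cubic\<close>

text \<open>(v1, v2, v3) is the tangential point of D = (x, y, w), where the tangent at D meets the cubic
  again; the left-hand side below is -1/3 times the discriminant of the quadratic
  t \<mapsto> hesse_cubic q (b + t v).\<close>

lemma hesse_tangential_identity:
  fixes q x y w b1 b2 b3 :: real
  assumes "hesse_cubic q x y w = 0"
  defines "v1 \<equiv> x*(y^3 - w^3)" and "v2 \<equiv> y*(w^3 - x^3)" and "v3 \<equiv> w*(x^3 - y^3)"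
    and "\<rho> \<equiv> x^2*b1 + y^2*b2 + w^2*b3" and "\<sigma> \<equiv> y*w*b1 + x*w*b2 + x*y*b3"
  shows "4 * hesse_polar q v1 v2 v3 b1 b2 b3 * hesse_cubic q b1 b2 b3
           - 3 * (hesse_polar q b1 b2 b3 v1 v2 v3)^2
         = hesse_polar q x y w b1 b2 b3 * (\<rho>^3 + 3*q*\<rho>^2*\<sigma> - 4*\<sigma>^3)"
  using assms(1) unfolding v1_def v2_def v3_def \<rho>_def \<sigma>_def hesse_cubic_def hesse_polar_def
  by algebra

lemma hesse_param_factor:
  "k \<noteq> 0 \<Longrightarrow> \<rho>^3 + 3*hesse_param k*\<rho>^2*\<sigma> - 4*\<sigma>^3 = (\<rho> - k*\<sigma>) * (\<rho>^2 + 4/k^2*\<rho>*\<sigma> + 4/k*\<sigma>^2)"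
  unfolding hesse_param_def by (simp add: field_simps) algebra

lemma hesse_param_quadratic_pos:
  fixes k \<rho> \<sigma> :: real
  assumes "k > 1" and "\<rho> \<noteq> 0 \<or> \<sigma> \<noteq> 0"
  shows "\<rho>^2 + 4/k^2*\<rho>*\<sigma> + 4/k*\<sigma>^2 > 0"
proof -
  have "k^2 * (\<rho>^2 + 4/k^2*\<rho>*\<sigma> + 4/k*\<sigma>^2) = (k*\<rho> + 2/k*\<sigma>)^2 + (4*k - 4/k^2)*\<sigma>^2"
    using assms(1) by (simp add: field_simps power2_eq_square)
  moreover have "1 < k * k^2"
    using assms(1) by (metis less_1_mult one_less_power pos2)
  then have "4/k^2 < 4*k"
    using assms(1) by (simp add: divide_less_eq)
  ultimately have "k^2 * (\<rho>^2 + 4/k^2*\<rho>*\<sigma> + 4/k*\<sigma>^2) > 0"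
    using assms by (cases "\<sigma> = 0") (auto intro!: add_nonneg_pos)
  then show ?thesis
    using assms(1) by (simp add: zero_less_mult_iff)
qed

lemma hesse_tangential_polar:
  fixes q x y w b1 b2 b3 :: real
  assumes "hesse_cubic q x y w = 0"
  defines "v1 \<equiv> x*(y^3 - w^3)" and "v2 \<equiv> y*(w^3 - x^3)" and "v3 \<equiv> w*(x^3 - y^3)"
    and "e1 \<equiv> x^3 + y^3 + w^3" and "e2 \<equiv> x^3*y^3 + y^3*w^3 + w^3*x^3"
  shows "3 * x*y*w * hesse_polar q v1 v2 v3 b1 b2 b3
       = x*y*w * (e1^2 - 3*e2) * (x^2*b1 + y^2*b2 + w^2*b3)
         - (9*x^3*y^3*w^3 - e1*e2) * (y*w*b1 + x*w*b2 + x*y*b3)"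
  using assms(1) unfolding v1_def v2_def v3_def e1_def e2_def hesse_cubic_def hesse_polar_def
  by algebra

lemma tangential_polar_mult_cubic_pos:
  fixes k x y w b1 b2 b3 :: real
  defines "q \<equiv> hesse_param k"
    and "v1 \<equiv> x*(y^3 - w^3)" and "v2 \<equiv> y*(w^3 - x^3)" and "v3 \<equiv> w*(x^3 - y^3)"
  assumes "k > 1" and on_curve: "hesse_cubic q x y w = 0"
    and polars_neg: "hesse_polar q x y w b1 b2 b3 < 0" "hesse_polar k x y w b1 b2 b3 < 0"
  shows "hesse_polar q v1 v2 v3 b1 b2 b3 * hesse_cubic q b1 b2 b3 > 0"
proof -
  define \<rho> where "\<rho> = x^2*b1 + y^2*b2 + w^2*b3"
  define \<sigma> where "\<sigma> = y*w*b1 + x*w*b2 + x*y*b3"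
  have polar_split: "hesse_polar t x y w b1 b2 b3 = \<rho> - t*\<sigma>" for t
    unfolding hesse_polar_def \<rho>_def \<sigma>_def ..
  then have "0 < (\<rho> - q*\<sigma>) * (\<rho> - k*\<sigma>)" "\<rho> \<noteq> 0 \<or> \<sigma> \<noteq> 0"
    using polars_neg by (auto simp: mult_neg_neg)
  then have "0 < (\<rho> - q*\<sigma>) * ((\<rho> - k*\<sigma>) * (\<rho>^2 + 4/k^2*\<rho>*\<sigma> + 4/k*\<sigma>^2))"
    using hesse_param_quadratic_pos[OF \<open>k > 1\<close>] by (metis mult.assoc mult_pos_pos)
  also have "\<dots> = (\<rho> - q*\<sigma>) * (\<rho>^3 + 3*q*\<rho>^2*\<sigma> - 4*\<sigma>^3)"
    using hesse_param_factor[of k, folded q_def] \<open>k > 1\<close> by simp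
  also have "\<dots> = 4 * hesse_polar q v1 v2 v3 b1 b2 b3 * hesse_cubic q b1 b2 b3
                    - 3 * (hesse_polar q b1 b2 b3 v1 v2 v3)^2"
    using hesse_tangential_identity[OF on_curve, of b1 b2 b3, folded v1_def v2_def v3_def \<rho>_def \<sigma>_def]
    unfolding polar_split by simp
  finally have "3 * (hesse_polar q b1 b2 b3 v1 v2 v3)^2 < 4 * (hesse_polar q v1 v2 v3 b1 b2 b3 * hesse_cubic q b1 b2 b3)"
    by (simp add: mult.assoc)
  then show ?thesis
    using zero_le_power2[of "hesse_polar q b1 b2 b3 v1 v2 v3"] by linarith
qed

lemma tangential_test_point:
  fixes q x y w :: real
  defines "v1 \<equiv> x*(y^3 - w^3)" and "v2 \<equiv> y*(w^3 - x^3)" and "v3 \<equiv> w*(x^3 - y^3)"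
  assumes "x > 0" "y > 0" "w < 0" and on_curve: "hesse_cubic q x y w = 0"
  obtains n1 n2 n3 where "\<And>t. hesse_polar t x y w n1 n2 n3 < 0" and "hesse_polar q v1 v2 v3 n1 n2 n3 < 0"
proof -
  \<comment> \<open>(v1, v2, v3) is the cross product of (x^2, y^2, w^2) and (y w, x w, x y); crossing it once more
    with (y w, x w, x y) gives a point n on which every polar at (x, y, w) equals -(v1^2 + v2^2 + v3^2).\<close>
  define n1 where "n1 = v2*x*y - v3*x*w"
  define n2 where "n2 = v3*y*w - v1*x*y"
  define n3 where "n3 = v1*x*w - v2*y*w"
  have n_split: "x^2*n1 + y^2*n2 + w^2*n3 = - (v1^2 + v2^2 + v3^2)" "y*w*n1 + x*w*n2 + x*y*n3 = 0"
    unfolding n1_def n2_def n3_def v1_def v2_def v3_def by algebra+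
  have "w^3 < 0" "y^3 > 0"
    using \<open>y > 0\<close> \<open>w < 0\<close> by (simp_all add: power_less_zero_eq)
  then have "y^3 - w^3 > 0"
    by linarith
  then have "v1 > 0"
    unfolding v1_def using \<open>x > 0\<close> by simp
  then have V_pos: "v1^2 + v2^2 + v3^2 > 0"
    by (intro add_pos_nonneg) auto
  then have "hesse_polar t x y w n1 n2 n3 < 0" for t
    using n_split unfolding hesse_polar_def by simp
  moreover have "hesse_polar q v1 v2 v3 n1 n2 n3 < 0"
  proof -
    define e1 where "e1 = x^3 + y^3 + w^3"
    define e2 where "e2 = x^3*y^3 + y^3*w^3 + w^3*x^3"
    have "x*y*w * (3 * hesse_polar q v1 v2 v3 n1 n2 n3) = x*y*w * ((e1^2 - 3*e2) * -(v1^2 + v2^2 + v3^2))"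
      using hesse_tangential_polar[OF on_curve, of n1 n2 n3, folded v1_def v2_def v3_def e1_def e2_def]
      unfolding n_split by simp
    then have polar_n: "3 * hesse_polar q v1 v2 v3 n1 n2 n3 = (e1^2 - 3*e2) * -(v1^2 + v2^2 + v3^2)"
      using \<open>x > 0\<close> \<open>y > 0\<close> \<open>w < 0\<close> by simp
    have "2 * (e1^2 - 3*e2) = (x^3 - y^3)^2 + (y^3 - w^3)^2 + (w^3 - x^3)^2"
      unfolding e1_def e2_def by (simp add: algebra_simps power2_eq_square)
    moreover have "0 < (x^3 - y^3)^2 + (y^3 - w^3)^2 + (w^3 - x^3)^2"
      using \<open>y^3 - w^3 > 0\<close> by (intro add_pos_nonneg add_nonneg_pos) auto
    ultimately have "e1^2 - 3*e2 > 0"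
      by simp
    then have "(e1^2 - 3*e2) * -(v1^2 + v2^2 + v3^2) < 0"
      using V_pos by (intro mult_pos_neg) auto
    then show ?thesis
      using polar_n by linarith
  qed
  ultimately show ?thesis
    using that by blast
qed

text \<open>On the convex cone of points b where both polars at D are negative, the linear form
  hesse_polar q v b and hesse_cubic q b have the same sign. That form is negative at the test
  point n, and it cannot change sign on the cone without vanishing there, so hesse_cubic q < 0
  on the whole cone.\<close>

lemma hesse_cubic_neg_if_polars_neg:
  fixes k x y w a1 a2 a3 :: real
  defines "q \<equiv> hesse_param k"
  assumes "k > 1" and "x > 0" "y > 0" "w < 0" and on_curve: "hesse_cubic q x y w = 0"
    and polars_neg: "hesse_polar q x y w a1 a2 a3 < 0" "hesse_polar k x y w a1 a2 a3 < 0"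
  shows "hesse_cubic q a1 a2 a3 < 0"
proof (rule ccontr)
  assume "\<not> hesse_cubic q a1 a2 a3 < 0"
  define v1 where "v1 = x*(y^3 - w^3)"
  define v2 where "v2 = y*(w^3 - x^3)"
  define v3 where "v3 = w*(x^3 - y^3)"
  define \<tau> where "\<tau> b1 b2 b3 = hesse_polar q v1 v2 v3 b1 b2 b3" for b1 b2 b3
  have \<tau>_sign: "\<tau> b1 b2 b3 * hesse_cubic q b1 b2 b3 > 0"
    if "hesse_polar q x y w b1 b2 b3 < 0" "hesse_polar k x y w b1 b2 b3 < 0" for b1 b2 b3
    using tangential_polar_mult_cubic_pos[OF \<open>k > 1\<close> on_curve[unfolded q_def] that[unfolded q_def]]
    unfolding \<tau>_def v1_def v2_def v3_def q_def .
  obtain n1 n2 n3 where n_polars: "\<And>t. hesse_polar t x y w n1 n2 n3 < 0" and "\<tau> n1 n2 n3 < 0"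
    using tangential_test_point[OF \<open>x > 0\<close> \<open>y > 0\<close> \<open>w < 0\<close> on_curve]
    unfolding \<tau>_def v1_def v2_def v3_def by blast
  have "\<tau> a1 a2 a3 > 0"
    using \<tau>_sign[OF polars_neg] \<open>\<not> hesse_cubic q a1 a2 a3 < 0\<close> by (auto simp: zero_less_mult_iff)
  define \<theta> where "\<theta> = \<tau> a1 a2 a3 / (\<tau> a1 a2 a3 - \<tau> n1 n2 n3)"
  have "0 < \<theta>" "\<theta> < 1"
    unfolding \<theta>_def using \<open>\<tau> a1 a2 a3 > 0\<close> \<open>\<tau> n1 n2 n3 < 0\<close> by (auto simp: field_simps)
  define c1 where "c1 = (1-\<theta>)*a1 + \<theta>*n1"
  define c2 where "c2 = (1-\<theta>)*a2 + \<theta>*n2"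
  define c3 where "c3 = (1-\<theta>)*a3 + \<theta>*n3"
  have "\<tau> c1 c2 c3 = (1-\<theta>) * \<tau> a1 a2 a3 + \<theta> * \<tau> n1 n2 n3"
    unfolding c1_def c2_def c3_def \<tau>_def by (rule hesse_polar_convex_comb)
  then have "\<tau> c1 c2 c3 = 0"
    using \<open>\<tau> a1 a2 a3 > 0\<close> \<open>\<tau> n1 n2 n3 < 0\<close> by (simp add: \<theta>_def field_simps)
  moreover have "hesse_polar t x y w c1 c2 c3 < 0" if "hesse_polar t x y w a1 a2 a3 < 0" for t
    unfolding c1_def c2_def c3_def hesse_polar_convex_comb
    using that n_polars[of t] \<open>0 < \<theta>\<close> \<open>\<theta> < 1\<close> by (intro add_neg_neg mult_pos_neg) auto
  ultimately show False
    using \<tau>_sign[of c1 c2 c3] polars_neg by simp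
qed

section \<open>Open arcs on C2\<close>

lemma open_arc_graph_ball:
  fixes f :: "real \<Rightarrow> real"
  assumes "d > 0" and "continuous_on (ball x0 d) f"
  shows "open_arc ((\<lambda>x. (x, f x)) ` ball x0 d)"
proof -
  have "homeomorphism (ball x0 d) ((\<lambda>x. (x, f x)) ` ball x0 d) (\<lambda>x. (x, f x)) fst"
    by (rule homeomorphismI) (auto intro: assms(2) continuous_intros)
  then have "(\<lambda>x. (x, f x)) ` ball x0 d homeomorphic ball x0 d"
    using homeomorphic_def homeomorphic_sym by blast
  moreover have "ball x0 d homeomorphic ball (1/2 :: real) (1/2)"
    using homeomorphic_balls(1)[OF assms(1), of "1/2" x0] by simp
  moreover have "ball (1/2 :: real) (1/2) = {0<..<1}"
    by (simp add: ball_eq_greaterThanLessThan)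
  ultimately show ?thesis
    unfolding open_arc_def by (metis homeomorphic_trans)
qed

lemma graph_contains_open_arc:
  fixes f :: "real \<Rightarrow> real"
  assumes "open X" and "continuous_on X f" and "x0 \<in> X"
  obtains T where "open_arc T" "connected T" "(x0, f x0) \<in> T" "T \<subseteq> (\<lambda>x. (x, f x)) ` X"
proof -
  obtain d where "d > 0" "ball x0 d \<subseteq> X"
    using assms(1,3) openE by blast
  then have "continuous_on (ball x0 d) f"
    using assms(2) continuous_on_subset by blast
  then have "open_arc ((\<lambda>x. (x, f x)) ` ball x0 d)" "connected ((\<lambda>x. (x, f x)) ` ball x0 d)"
    using open_arc_graph_ball \<open>d > 0\<close> by (auto intro!: connected_continuous_image continuous_intros)
  moreover have "(x0, f x0) \<in> (\<lambda>x. (x, f x)) ` ball x0 d"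
    using \<open>d > 0\<close> by simp
  ultimately show ?thesis
    using that \<open>ball x0 d \<subseteq> X\<close> by blast
qed

lemma components_of_graph_contain_open_arc:
  fixes f :: "real \<Rightarrow> real"
  assumes "open X" and "continuous_on X f" and S: "S \<in> components ((\<lambda>x. (x, f x)) ` X)"
  shows "\<exists>T \<subseteq> S. open_arc T"
proof -
  obtain x0 where "x0 \<in> X" "(x0, f x0) \<in> S"
    using in_components_nonempty[OF S] in_components_subset[OF S] by blast
  then obtain T where "open_arc T" "connected T" "(x0, f x0) \<in> T" "T \<subseteq> (\<lambda>x. (x, f x)) ` X"
    using graph_contains_open_arc[OF assms(1,2)] by blast
  then have "T \<subseteq> S"
    using components_maximal[OF S] \<open>(x0, f x0) \<in> S\<close> by blast
  then show ?thesis
    using \<open>open_arc T\<close> by blast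
qed

lemma C2_filter_eq_graph:
  assumes "k > 1"
  shows "{D \<in> C2 k. P D} = (\<lambda>x. (x, branch_graph (hesse_m k) x))
           ` {x. 1 < hesse_m k * x \<and> P (x, branch_graph (hesse_m k) x)}"
  using assms by (auto simp: C2_eq_hesse_branch mem_hesse_branch_iff_graph hesse_m_pos)

lemma continuous_on_hesse_polar_graph:
  "continuous_on {x. 1 < m*x}
     (\<lambda>x. hesse_polar t x (branch_graph m x) (1 - x - branch_graph m x) a b (1 - a - b))"
  unfolding hesse_polar_def
  by (intro continuous_intros continuous_on_branch_graph)

lemma open_Collect_hesse_polar_graph:
  "open {x. 1 < m*x \<and> P (hesse_polar t x (branch_graph m x) (1 - x - branch_graph m x) a b (1 - a - b))}"
  if "open {u. P u}"
  using continuous_open_preimage[OF continuous_on_hesse_polar_graph _ that, of m t a b]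
  by (simp add: open_Collect_less vimage_def Collect_conj_eq)

lemma hesse_polar_graph_tendsto:
  fixes g :: "real \<Rightarrow> real"
  assumes "(g \<longlongrightarrow> L) at_top"
  shows "((\<lambda>x. hesse_polar t x (g x) (1 - x - g x) a b (1 - a - b) / x^2) \<longlongrightarrow> 1 + (t - 1)*b) at_top"
proof -
  define \<alpha> where "\<alpha> y = -2*(1-a-b)*(1-y) + t*a*y - t*b*(1-y) - t*(1-a-b)*y" for y
  define \<beta> where "\<beta> y = b*y^2 + (1-a-b)*(1-y)^2 - t*a*y*(1-y)" for y
  have expand: "hesse_polar t x y (1 - x - y) a b (1 - a - b) = x^2 * (1 + (t - 1)*b) + x * \<alpha> y + \<beta> y"
    for x y
    unfolding hesse_polar_def \<alpha>_def \<beta>_def by algebra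
  have "eventually (\<lambda>x. (1 + (t - 1)*b) + \<alpha> (g x) * inverse x + \<beta> (g x) * (inverse x)^2
      = hesse_polar t x (g x) (1 - x - g x) a b (1 - a - b) / x^2) at_top"
    using eventually_gt_at_top[of 0]
    by eventually_elim (unfold expand, simp add: field_simps power2_eq_square)
  moreover have "((\<lambda>x. (1 + (t - 1)*b) + \<alpha> (g x) * inverse x + \<beta> (g x) * (inverse x)^2)
      \<longlongrightarrow> (1 + (t - 1)*b) + \<alpha> L * 0 + \<beta> L * 0^2) at_top"
    unfolding \<alpha>_def \<beta>_def by (intro tendsto_intros assms tendsto_inverse_0_at_top filterlim_ident)
  ultimately show ?thesis
    by (simp add: tendsto_cong)
qed

lemma ell3_neg_if_ell2_nonpos:
  assumes "k > 1" and "a < - 1 / (k - 1)" and "hesse_m k * b \<le> 1"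
  shows "ell3 (hesse_m k) (a, b) < 0"
proof -
  define m where "m = hesse_m k"
  have "a * (k - 1) < -1"
    using assms(1,2) by (simp add: field_simps)
  then have "m * (a * (k - 1)) < m * -1"
    using hesse_m_pos[OF assms(1)] unfolding m_def by (rule mult_strict_left_mono)
  then have "m * a < - m / (k - 1)"
    using assms(1) by (simp add: field_simps)
  moreover have "m / (k - 1) + m = (k + 2)^2 / (3*k)"
    unfolding m_def using assms(1) by (simp add: hesse_m_eq field_simps power2_eq_square)
  moreover have "(k + 2)^2 = 6*k + ((k - 1)^2 + 3)"
    by (simp add: power2_eq_square algebra_simps)
  then have "2 < (k + 2)^2 / (3*k)"
    using assms(1) by (simp add: less_divide_eq add_nonneg_pos)
  ultimately show ?thesis
    using assms(3) unfolding ell3_def m_def by (simp add: distrib_left)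
qed

lemma hesse_m_mul_gt_one:
  assumes "k > 1" and "a < - 1 / (k - 1)" and "hesse_cubic (hesse_param k) a b (1 - a - b) \<le> 0"
  shows "1 < hesse_m k * b"
proof (rule ccontr)
  assume "\<not> 1 < hesse_m k * b"
  define m where "m = hesse_m k"
  have "m > 0"
    unfolding m_def using assms(1) by (rule hesse_m_pos)
  have "3 / m^2 * (branch_level m - ell1 m (a, b) * ell2 m (a, b) * ell3 m (a, b)) \<le> 0"
    using assms(3) hesse_cubic_eq_lines[of m a b] \<open>m > 0\<close> unfolding m_def one_minus_hesse_m by simp
  then have "branch_level m \<le> ell1 m (a, b) * ell2 m (a, b) * ell3 m (a, b)"
    using \<open>m > 0\<close> by (auto simp: divide_le_0_iff)
  then have prod_pos: "0 < ell1 m (a, b) * ell2 m (a, b) * ell3 m (a, b)"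
    using branch_level_pos[of m] by linarith
  have "- 1 / (k - 1) < 0"
    using assms(1) by simp
  then have "a < 0"
    using assms(2) by linarith
  then have "ell1 m (a, b) < 0"
    using mult_pos_neg[OF \<open>m > 0\<close>] unfolding ell1_def by fastforce
  moreover have "ell2 m (a, b) \<le> 0"
    using \<open>\<not> 1 < hesse_m k * b\<close> unfolding ell2_def m_def by simp
  ultimately have "0 \<le> ell1 m (a, b) * ell2 m (a, b)"
    by (simp add: mult_nonpos_nonpos)
  moreover have "ell3 m (a, b) < 0"
    using \<open>\<not> 1 < hesse_m k * b\<close> ell3_neg_if_ell2_nonpos[OF assms(1,2)] unfolding m_def by simp
  ultimately have "ell1 m (a, b) * ell2 m (a, b) * ell3 m (a, b) \<le> 0"
    by (simp add: mult_nonneg_nonpos)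
  then show False
    using prod_pos by simp
qed

lemma visible_arcs_in_components:
  assumes "k > 1" and "0 \<le> hesse_cubic (hesse_param k) a b (1 - a - b)"
    and S: "S \<in> components {D \<in> C2 k. polar k (a, b, 1) (fst D, snd D, 1) > 0}"
  shows "\<exists>T \<subseteq> S. open_arc T \<and> (\<forall>D \<in> T. visible k (a, b) D)"
proof -
  define g where "g = branch_graph (hesse_m k)"
  define X where "X = {x. 1 < hesse_m k * x \<and> hesse_polar k x (g x) (1 - x - g x) a b (1 - a - b) < 0}"
  have visible: "visible k (a, b) D" if "D \<in> C2 k" and "polar k (a, b, 1) (fst D, snd D, 1) > 0" for D
  proof -
    obtain x y where D: "D = (x, y)"
      by (cases D)
    have "0 < x" "0 < y" "1 - x - y < 0" and on_curve: "hesse_cubic (hesse_param k) x y (1 - x - y) = 0"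
      using that(1) assms(1) Hess_eq_hesse_cubic[of k x y 1] unfolding D C2_def by auto
    moreover have "hesse_polar k x y (1 - x - y) a b (1 - a - b) < 0"
      using that(2) unfolding D polar_eq_hesse_polar by simp
    ultimately have "\<not> hesse_polar (hesse_param k) x y (1 - x - y) a b (1 - a - b) < 0"
      using hesse_cubic_neg_if_polars_neg[OF assms(1)] assms(2) by fastforce
    then show ?thesis
      using visible_iff_hesse_polar[OF assms(1)] that(1) unfolding D by simp
  qed
  have "{D \<in> C2 k. polar k (a, b, 1) (fst D, snd D, 1) > 0} = (\<lambda>x. (x, g x)) ` X"
    unfolding C2_filter_eq_graph[OF assms(1)] g_def X_def polar_eq_hesse_polar by simp
  moreover have "open X"
    unfolding X_def g_def
    by (rule open_Collect_hesse_polar_graph) (auto intro!: open_Collect_less continuous_intros)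
  moreover have "continuous_on X g"
    unfolding g_def X_def by (rule continuous_on_subset[OF continuous_on_branch_graph]) auto
  ultimately obtain T where "T \<subseteq> S" "open_arc T"
    using components_of_graph_contain_open_arc[of X g S] S by auto
  moreover have "visible k (a, b) D" if "D \<in> S" for D
    using that in_components_subset[OF S] visible by blast
  ultimately show ?thesis
    by blast
qed

lemma invisible_arc:
  assumes "k > 1" and "a < - 1 / (k - 1)" and "b > - 1 / (k - 1)"
    and "hesse_cubic (hesse_param k) a b (1 - a - b) \<le> 0"
  shows "\<exists>T. T \<subseteq> {D \<in> C2 k. polar k (a, b, 1) (fst D, snd D, 1) < 0} \<and> open_arc T
               \<and> (\<forall>D \<in> T. \<not> visible k (a, b) D)"
proof -
  define m where "m = hesse_m k"
  define g where "g = branch_graph m"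
  define P where "P t x = hesse_polar t x (g x) (1 - x - g x) a b (1 - a - b)" for t x
  define X where "X = {x. 1 < m*x \<and> 0 < P k x} \<inter> {x. 1 < m*x \<and> P (hesse_param k) x < 0}"
  have "m > 0"
    unfolding m_def using assms(1) by (rule hesse_m_pos)
  have "open X"
    unfolding X_def P_def g_def
    by (intro open_Int open_Collect_hesse_polar_graph) (auto intro!: open_Collect_less continuous_intros)
  have "continuous_on X g"
    unfolding g_def X_def by (rule continuous_on_subset[OF continuous_on_branch_graph]) auto
  have "(g \<longlongrightarrow> 1/m) at_top"
    unfolding g_def using branch_graph_tendsto[OF \<open>m > 0\<close>] .
  then have lim: "((\<lambda>x. P t x / x^2) \<longlongrightarrow> 1 + (t - 1)*b) at_top" for t
    unfolding P_def by (rule hesse_polar_graph_tendsto)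
  \<comment> \<open>Far out on the branch, P t x grows like (1 + (t - 1) b) x^2, with opposite signs for
    t = k and t = 1 - m.\<close>
  have "0 < 1 + (k - 1)*b"
    using assms(1,3) by (simp add: field_simps)
  then have ev_k: "eventually (\<lambda>x. 0 < P k x / x^2) at_top"
    by (rule order_tendstoD(1)[OF lim])
  have "1 + (hesse_param k - 1)*b < 0"
    using hesse_m_mul_gt_one[OF assms(1,2,4)] unfolding one_minus_hesse_m[symmetric] by simp
  then have ev_q: "eventually (\<lambda>x. P (hesse_param k) x / x^2 < 0) at_top"
    by (rule order_tendstoD(2)[OF lim])
  have "eventually (\<lambda>x. 0 < P k x / x^2 \<and> P (hesse_param k) x / x^2 < 0 \<and> 1/m < x) at_top"
    by (intro eventually_conj ev_k ev_q eventually_gt_at_top)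
  then obtain x1 where "0 < P k x1 / x1^2" "P (hesse_param k) x1 / x1^2 < 0" "1/m < x1"
    using eventually_happens[of _ "at_top :: real filter"] by auto
  moreover have "1 < m * x1"
    using \<open>1/m < x1\<close> \<open>m > 0\<close> by (simp add: divide_less_eq mult.commute)
  ultimately have "x1 \<in> X"
    unfolding X_def by (simp add: zero_less_divide_iff divide_less_0_iff)
  then obtain T where T: "open_arc T" "T \<subseteq> (\<lambda>x. (x, g x)) ` X"
    using graph_contains_open_arc[OF \<open>open X\<close> \<open>continuous_on X g\<close>] by blast
  have "(x, g x) \<in> C2 k" "polar k (a, b, 1) (x, g x, 1) < 0" "\<not> visible k (a, b) (x, g x)"
    if "x \<in> X" for x
  proof -
    show "(x, g x) \<in> C2 k"
      using that assms(1) unfolding X_def g_def m_def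
      by (simp add: C2_eq_hesse_branch mem_hesse_branch_iff_graph hesse_m_pos)
    then show "\<not> visible k (a, b) (x, g x)"
      using that visible_iff_hesse_polar[OF assms(1)] unfolding X_def P_def by simp
    show "polar k (a, b, 1) (x, g x, 1) < 0"
      using that unfolding X_def P_def polar_eq_hesse_polar by simp
  qed
  then have "T \<subseteq> {D \<in> C2 k. polar k (a, b, 1) (fst D, snd D, 1) < 0}" "\<forall>D \<in> T. \<not> visible k (a, b) D"
    using T(2) by auto
  then show ?thesis
    using T(1) by blast
qed

theorem proposition2p3:
  fixes k a b :: real
  assumes "k > 1" and "a < - 1 / (k - 1)" and "b > - 1 / (k - 1)"
  shows "(Hess k a b 1 \<ge> 0 \<longrightarrow>
            (\<forall>S \<in> components {D \<in> C2 k. polar k (a, b, 1) (fst D, snd D, 1) > 0}.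
               \<exists>T \<subseteq> S. open_arc T \<and> (\<forall>D \<in> T. visible k (a, b) D)))
       \<and> (Hess k a b 1 \<le> 0 \<longrightarrow>
            (\<exists>T. T \<subseteq> {D \<in> C2 k. polar k (a, b, 1) (fst D, snd D, 1) < 0} \<and> open_arc T
                 \<and> (\<forall>D \<in> T. \<not> visible k (a, b) D)))"
proof -
  have Hess_A: "Hess k a b 1 = 54 * k^2 * hesse_cubic (hesse_param k) a b (1 - a - b)"
    using assms(1) Hess_eq_hesse_cubic[of k a b 1] by simp
  have "54 * k^2 > 0"
    using assms(1) by simp
  then have "Hess k a b 1 \<ge> 0 \<longleftrightarrow> hesse_cubic (hesse_param k) a b (1 - a - b) \<ge> 0"
    and "Hess k a b 1 \<le> 0 \<longleftrightarrow> hesse_cubic (hesse_param k) a b (1 - a - b) \<le> 0"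
    unfolding Hess_A by (simp_all add: zero_le_mult_iff mult_le_0_iff)
  then show ?thesis
    using visible_arcs_in_components[OF assms(1)] invisible_arc[OF assms] by blast
qed

end
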